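(* If $M\preceq N$ are two non-quasianalytic weight sequences, then $L(M)\preceq L(N)$ and $\underline L(M)\preceq\underline L(N)$.
   Context: A weight sequence is $M=(M_k)_{k\ge0}$ with $M_k=\mu_0\cdots\mu_k$, $1=\mu_0\le\mu_1\le\cdots$, $\mu_k\to\infty$; non-quasianalytic if $\sum1/\mu_k<\infty$. For positive sequences, $M\preceq N$ means $\sup_{k\ge1}(M_k/N_k)^{1/k}<\infty$. $L(M)_0=1$, $L(M)_k=\min_{0\le j<k}\big(k/\sum_{\ell\ge k}\mu_\ell^{-1}\big)^{k-j}M_j$ for $k\ge1$. For a positive sequence $P$ with $P_k^{1/k}\to\infty$, $\omega_P(t)=\sup_k\log(t^kP_0/P_k)$ and its log-convex minorant is $\underline P_k=P_0\sup_{t\ge0}t^ke^{-\omega_P(t)}$; $\underline L(M)$ is the log-convex minorant of $L(M)$. *)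

theory Defs
  imports "HOL-Analysis.Analysis"
begin

definition weight_seq :: "(nat \<Rightarrow> real) \<Rightarrow> bool" where
  "weight_seq M \<longleftrightarrow> (\<exists>mu :: nat \<Rightarrow> real. mu 0 = 1 \<and> mono mu \<and>
      filterlim mu at_top sequentially \<and> (\<forall>k. M k = (\<Prod>j\<le>k. mu j)))"

definition wmu :: "(nat \<Rightarrow> real) \<Rightarrow> nat \<Rightarrow> real" where
  "wmu M k = (if k = 0 then 1 else M k / M (k - 1))"

definition non_quasianalytic :: "(nat \<Rightarrow> real) \<Rightarrow> bool" where
  "non_quasianalytic M \<longleftrightarrow> summable (\<lambda>k. 1 / wmu M k)"

definition seq_preceq :: "(nat \<Rightarrow> real) \<Rightarrow> (nat \<Rightarrow> real) \<Rightarrow> bool" where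
  "seq_preceq M N \<longleftrightarrow> bdd_above {(M k / N k) powr (1 / real k) | k. k \<ge> 1}"

definition LM :: "(nat \<Rightarrow> real) \<Rightarrow> nat \<Rightarrow> real" where
  "LM M k = (if k = 0 then 1 else
     Min ((\<lambda>j. (real k / (\<Sum>l. 1 / wmu M (l + k))) ^ (k - j) * M j) ` {..<k}))"

definition omegaP :: "(nat \<Rightarrow> real) \<Rightarrow> real \<Rightarrow> real" where
  "omegaP P t = (SUP k. ln (t ^ k * P 0 / P k))"

definition lc_minorant :: "(nat \<Rightarrow> real) \<Rightarrow> nat \<Rightarrow> real" where
  "lc_minorant P k = P 0 * (SUP t\<in>{0..}. t ^ k * exp (- omegaP P t))"

end

theory Submission
  imports Defs
begin

text \<open>Let \<open>kappa t = (\<Sum>l. lin_log (t / mu (l + 1)))\<close> and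
  \<open>sig k = k / (\<Sum>l. 1 / mu (l + k))\<close>. There is a two-sided estimate
  \<open>t^k exp (- kappa t) \<le> L(M) k \<le> e^(2k) (sig k)^k exp (- kappa (sig k))\<close>:
  the lower bound holds because kappa dominates the associated function of M and grows at least
  like \<open>k ln t\<close> beyond \<open>sig k\<close>; the upper bound comes from choosing, in the minimum defining
  \<open>L(M) k\<close>, the index j at which mu crosses \<open>sig k\<close>.
  If \<open>M k \<le> C^k N k\<close>, then, since lin_log is convex in \<open>ln x\<close> with slope \<open>min x 1\<close>, which
  decreases along \<open>x = t / nu (l + 1)\<close>, Abel summation gives \<open>kappa_N t \<le> kappa_M (C t)\<close>, and the
  two-sided estimate yields \<open>L(M) k \<le> (e^2 C)^k L(N) k\<close>. The lower bound also makes the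
  associated function of \<open>L(M)\<close> finite, and \<open>P k \<le> D^k Q k\<close> passes to the log-convex minorants
  because it gives \<open>omega_Q (t / D) \<le> omega_P t\<close>.\<close>

definition lin_log :: "real \<Rightarrow> real" where
  "lin_log x = (if 1 \<le> x then 1 + ln x else x)"

lemma lin_log_le: "lin_log x \<le> x"
  unfolding lin_log_def using ln_le_minus_one[of x] by auto

lemma lin_log_nonneg: "0 \<le> x \<Longrightarrow> 0 \<le> lin_log x"
  unfolding lin_log_def by auto

lemma ln_le_lin_log: "0 < x \<Longrightarrow> ln x \<le> lin_log x"
  unfolding lin_log_def using ln_le_minus_one[of x] by auto

lemma lin_log_le_one: "x < 1 \<Longrightarrow> lin_log x \<le> 1"
  unfolding lin_log_def by auto

lemma lin_log_le_one_plus_ln: "1 \<le> x \<Longrightarrow> lin_log x \<le> 1 + ln x"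
  unfolding lin_log_def by auto

lemma lin_log_diff_ge:
  assumes x: "0 < x" and y: "0 < y"
  shows "min x 1 * ln (y / x) \<le> lin_log y - lin_log x"
proof -
  have ln_yx: "ln (y / x) = ln y - ln x" using x y by (simp add: ln_div)
  have ln_x: "- x * ln x \<le> 1 - x"
    using ln_le_minus_one[of "1 / x"] x by (simp add: ln_div field_simps)
  have yx: "x * ln (y / x) \<le> y - x"
    using ln_le_minus_one[of "y / x"] x y mult_left_mono[of "ln (y / x)" "y / x - 1" x]
    by (simp add: field_simps)
  consider "1 \<le> x" "1 \<le> y" | "1 \<le> x" "y < 1" | "x < 1" "1 \<le> y" | "x < 1" "y < 1"
    by linarith
  then show ?thesis
  proof cases
    case 3
    have "x * ln y \<le> ln y" using 3 x by (simp add: mult_left_le_one_le)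
    then show ?thesis using 3 ln_x ln_yx by (simp add: lin_log_def right_diff_distrib)
  qed (use ln_yx yx ln_le_minus_one[of y] y in \<open>simp_all add: lin_log_def\<close>)
qed

lemma sum_antimono_mult_nonneg:
  fixes c d :: "nat \<Rightarrow> real"
  assumes "\<And>l. c (Suc l) \<le> c l" and "\<And>l. 0 \<le> c l" and "\<And>n. 0 \<le> (\<Sum>l<n. d l)"
  shows "0 \<le> (\<Sum>l<n. c l * d l)"
proof -
  have "c n * (\<Sum>l<n. d l) \<le> (\<Sum>l<n. c l * d l)" for n
  proof (induction n)
    case (Suc n)
    have "c (Suc n) * (\<Sum>l<Suc n. d l) \<le> c n * (\<Sum>l<Suc n. d l)"
      using assms(1,3) by (intro mult_right_mono)
    also have "\<dots> = c n * (\<Sum>l<n. d l) + c n * d n" by (simp add: algebra_simps)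
    also have "\<dots> \<le> (\<Sum>l<Suc n. c l * d l)" using Suc by simp
    finally show ?case .
  qed simp
  moreover have "0 \<le> c n * (\<Sum>l<n. d l)" using assms(2,3) by simp
  ultimately show ?thesis by (meson order_trans)
qed

lemma seq_preceqI:
  assumes "0 < D" and "\<And>k. 0 \<le> A k" and "\<And>k. 0 < B k" and "\<And>k. A k \<le> D ^ k * B k"
  shows "seq_preceq A B"
  unfolding seq_preceq_def
proof (rule bdd_aboveI, safe)
  fix k :: nat assume k: "1 \<le> k"
  have "A k / B k \<le> D ^ k" using assms(3,4) by (simp add: divide_le_eq)
  then have "(A k / B k) powr (1 / real k) \<le> (D ^ k) powr (1 / real k)"
    using assms(2,3) by (intro powr_mono2) (auto intro: divide_nonneg_pos)
  also have "\<dots> = D" using k \<open>0 < D\<close> by (simp add: powr_realpow[symmetric] powr_powr)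
  finally show "(A k / B k) powr (1 / real k) \<le> D" .
qed

lemma seq_preceqE:
  assumes "seq_preceq A B" and A: "\<And>k. 0 < A k" and B: "\<And>k. 0 < B k" and "A 0 \<le> B 0"
  obtains C where "0 < C" and "\<And>k. A k \<le> C ^ k * B k"
proof -
  obtain D where D: "\<And>k. 1 \<le> k \<Longrightarrow> (A k / B k) powr (1 / real k) \<le> D"
    using assms(1) unfolding seq_preceq_def bdd_above_def by blast
  have "A k \<le> max D 1 ^ k * B k" for k
  proof (cases "k = 0")
    case False
    have "A k / B k = ((A k / B k) powr (1 / real k)) ^ k"
      using A[of k] B[of k] False by (simp add: powr_power)
    also have "\<dots> \<le> max D 1 ^ k"
      using D[of k] False by (intro power_mono) auto
    finally show ?thesis using B by (simp add: divide_le_eq)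
  qed (use assms(4) in simp)
  then show thesis using that[of "max D 1"] by simp
qed

text \<open>Finiteness of omegaP, which the paper derives from \<open>P k powr (1 / k) \<longrightarrow> \<infinity>\<close>, is assumed
  directly, for P normalised by \<open>P 0 = 1\<close>.\<close>
locale omega_finite =
  fixes P :: "nat \<Rightarrow> real"
  assumes P_0: "P 0 = 1" and P_pos: "0 < P k"
    and bdd_above_omega_pos: "0 < t \<Longrightarrow> bdd_above (range (\<lambda>k. ln (t ^ k * P 0 / P k)))"
begin

text \<open>At \<open>t = 0\<close> every term is \<open>ln 1\<close> or the junk value \<open>ln 0 = 0\<close>.\<close>
lemma bdd_above_omega: "0 \<le> t \<Longrightarrow> bdd_above (range (\<lambda>k. ln (t ^ k * P 0 / P k)))"
proof (cases "t = 0")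
  case True
  have "ln (t ^ k * P 0 / P k) = 0" for k using True P_0 by (cases k) auto
  then show ?thesis by (intro bdd_aboveI[where M = 0]) auto
qed (use bdd_above_omega_pos in auto)

lemma omegaP_ge: "0 \<le> t \<Longrightarrow> ln (t ^ k * P 0 / P k) \<le> omegaP P t"
  unfolding omegaP_def by (rule cSUP_upper[OF _ bdd_above_omega]) auto

lemma power_mult_exp_omegaP_le: "0 \<le> t \<Longrightarrow> t ^ k * exp (- omegaP P t) \<le> P k"
proof (cases "t = 0 \<and> k \<noteq> 0")
  case False
  assume "0 \<le> t"
  then have tk: "0 < t ^ k" using False by (auto simp: order.order_iff_strict)
  have "t ^ k / P k = exp (ln (t ^ k / P k))" using tk P_pos by simp
  also have "\<dots> \<le> exp (omegaP P t)" using omegaP_ge[OF \<open>0 \<le> t\<close>, of k] P_0 by simp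
  finally show ?thesis using P_pos[of k] by (simp add: exp_minus field_simps)
qed (use P_pos less_imp_le in \<open>auto simp: zero_power\<close>)

lemma bdd_above_lc_terms: "bdd_above ((\<lambda>t. t ^ k * exp (- omegaP P t)) ` {0..})"
  using power_mult_exp_omegaP_le by (intro bdd_aboveI[where M = "P k"]) auto

lemma lc_minorant_eq: "lc_minorant P k = (SUP t\<in>{0..}. t ^ k * exp (- omegaP P t))"
  unfolding lc_minorant_def P_0 by simp

lemma lc_minorant_pos: "0 < lc_minorant P k"
proof -
  have "0 < 1 ^ k * exp (- omegaP P 1)" by simp
  also have "\<dots> \<le> lc_minorant P k"
    unfolding lc_minorant_eq by (rule cSUP_upper[OF _ bdd_above_lc_terms]) simp
  finally show ?thesis .
qed

end

lemma omegaP_rescale_le: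
  assumes "omega_finite P" and "omega_finite Q" and D: "0 < D"
    and PQ: "\<And>k. P k \<le> D ^ k * Q k" and t: "0 \<le> t"
  shows "omegaP Q (t / D) \<le> omegaP P t"
  unfolding omegaP_def[of Q]
proof (rule cSUP_least)
  interpret P: omega_finite P by fact
  interpret Q: omega_finite Q by fact
  fix k
  have "ln ((t / D) ^ k * Q 0 / Q k) \<le> ln (t ^ k * P 0 / P k)"
  proof (cases "t = 0")
    case False
    have "(t / D) ^ k * Q 0 / Q k = t ^ k / (D ^ k * Q k)" using Q.P_0 by (simp add: power_divide)
    also have "\<dots> \<le> t ^ k / P k"
      using PQ[of k] P.P_pos[of k] Q.P_pos[of k] D t by (intro divide_left_mono) auto
    also have "\<dots> = t ^ k * P 0 / P k" using P.P_0 by simp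
    finally show ?thesis using False t D Q.P_pos[of k] Q.P_0 by (intro ln_mono) auto
  qed (use P.P_0 Q.P_0 in \<open>cases k, auto\<close>)
  also have "\<dots> \<le> omegaP P t" by (rule P.omegaP_ge[OF t])
  finally show "ln ((t / D) ^ k * Q 0 / Q k) \<le> omegaP P t" .
qed simp

lemma lc_minorant_le:
  assumes "omega_finite P" and "omega_finite Q" and D: "0 < D"
    and PQ: "\<And>k. P k \<le> D ^ k * Q k"
  shows "lc_minorant P k \<le> D ^ k * lc_minorant Q k"
  unfolding omega_finite.lc_minorant_eq[OF assms(1)] omega_finite.lc_minorant_eq[OF assms(2)]
proof (rule cSUP_least)
  fix t :: real assume "t \<in> {0..}"
  then have t: "0 \<le> t" by simp
  have "t ^ k * exp (- omegaP P t) \<le> t ^ k * exp (- omegaP Q (t / D))"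
    using omegaP_rescale_le[OF assms t] t by (intro mult_left_mono) auto
  also have "\<dots> = D ^ k * ((t / D) ^ k * exp (- omegaP Q (t / D)))"
    using D by (simp add: power_divide)
  also have "\<dots> \<le> D ^ k * (SUP t\<in>{0..}. t ^ k * exp (- omegaP Q t))"
    using t D
    by (intro mult_left_mono cSUP_upper[OF _ omega_finite.bdd_above_lc_terms[OF assms(2)]]) auto
  finally show "t ^ k * exp (- omegaP P t) \<le> D ^ k * (SUP t\<in>{0..}. t ^ k * exp (- omegaP Q t))" .
qed simp

lemma wmu_prod:
  assumes "mu 0 = 1" and "\<And>j. mu j \<noteq> 0"
  shows "wmu (\<lambda>k. \<Prod>j\<le>k. mu j) = mu"
proof
  fix k show "wmu (\<lambda>k. \<Prod>j\<le>k. mu j) k = mu k"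
    using assms by (cases k) (simp_all add: wmu_def)
qed

locale nq_weight =
  fixes M :: "nat \<Rightarrow> real"
  assumes weight_seq: "weight_seq M" and non_quasianalytic: "non_quasianalytic M"
begin

abbreviation mu :: "nat \<Rightarrow> real" where "mu \<equiv> wmu M"

lemma mu_mono_and_M_eq_prod: "mono mu \<and> (\<forall>k. M k = (\<Prod>j\<le>k. mu j))"
proof -
  obtain \<nu> where \<nu>: "\<nu> 0 = 1" "mono \<nu>" and M: "\<And>k. M k = (\<Prod>j\<le>k. \<nu> j)"
    using weight_seq unfolding weight_seq_def by auto
  have nonzero: "\<nu> j \<noteq> 0" for j using \<nu> monoD[OF \<nu>(2), of 0 j] by auto
  have "wmu (\<lambda>k. \<Prod>j\<le>k. \<nu> j) = \<nu>" by (rule wmu_prod[of \<nu>, OF \<nu>(1) nonzero])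
  moreover have "(\<lambda>k. \<Prod>j\<le>k. \<nu> j) = M" by (simp add: M fun_eq_iff)
  ultimately have "mu = \<nu>" by simp
  with \<nu>(2) M show ?thesis by simp
qed

lemma mu_0: "mu 0 = 1"
  by (simp add: wmu_def)

lemma mu_le: "a \<le> b \<Longrightarrow> mu a \<le> mu b"
  using mu_mono_and_M_eq_prod by (simp add: monoD)

lemma mu_ge_1: "1 \<le> mu l"
  using mu_le[of 0 l] mu_0 by simp

lemma mu_pos: "0 < mu l"
  using mu_ge_1[of l] by linarith

lemma mu_neq_0 [simp]: "mu l \<noteq> 0"
  using mu_pos[of l] by simp

lemma M_eq_prod: "M k = (\<Prod>j<k. mu (Suc j))"
proof -
  have "M k = (\<Prod>j\<le>k. mu j)" using mu_mono_and_M_eq_prod by blast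
  then show ?thesis by (simp only: prod.atMost_shift mu_0 mult_1)
qed

lemma M_pos: "0 < M k"
  by (subst M_eq_prod, intro prod_pos) (simp add: mu_pos)

lemma M_0: "M 0 = 1"
  by (subst M_eq_prod) simp

lemma ln_M: "ln (M k) = (\<Sum>l<k. ln (mu (Suc l)))"
  by (subst M_eq_prod, rule ln_prod) simp_all

lemma summable_inverse_mu: "summable (\<lambda>l. 1 / mu (l + k))"
  using non_quasianalytic summable_iff_shift[of "\<lambda>l. 1 / mu l" k]
  unfolding non_quasianalytic_def by simp

definition tail :: "nat \<Rightarrow> real" where
  "tail k = (\<Sum>l. 1 / mu (l + k))"

definition sig :: "nat \<Rightarrow> real" where
  "sig k = real k / tail k"

text \<open>The associated function \<open>SUP k. ln (t^k / M k)\<close> equals \<open>\<Sum>l. max 0 (ln (t / mu (l + 1)))\<close>;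
  kappa smooths it by replacing \<open>max 0 \<circ> ln\<close> with lin_log.\<close>
definition kappa :: "real \<Rightarrow> real" where
  "kappa t = (\<Sum>l. lin_log (t / mu (Suc l)))"

lemma LM_eq_Min: "0 < k \<Longrightarrow> LM M k = Min ((\<lambda>j. sig k ^ (k - j) * M j) ` {..<k})"
  unfolding LM_def sig_def tail_def by simp

lemma tail_pos: "0 < tail k"
  unfolding tail_def using summable_inverse_mu by (intro suminf_pos) (auto simp: mu_pos)

lemma sig_pos: "0 < k \<Longrightarrow> 0 < sig k"
  unfolding sig_def using tail_pos[of k] by simp

lemma sig_sums: "(\<lambda>l. sig k / mu (l + k)) sums real k"
proof -
  have "(\<lambda>l. sig k * (1 / mu (l + k))) sums (sig k * tail k)"
    unfolding tail_def using summable_inverse_mu by (intro sums_mult summable_sums)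
  moreover have "sig k * tail k = real k" unfolding sig_def using tail_pos[of k] by simp
  ultimately show ?thesis by simp
qed

lemma lin_log_div_mu_nonneg: "0 \<le> t \<Longrightarrow> 0 \<le> lin_log (t / mu l)"
  using mu_pos[of l] by (simp add: lin_log_nonneg)

lemma summable_lin_log:
  assumes "0 \<le> t"
  shows "summable (\<lambda>l. lin_log (t / mu (l + m)))"
proof (rule summable_comparison_test'[where N = 0])
  show "summable (\<lambda>l. t * (1 / mu (l + m)))" by (intro summable_mult summable_inverse_mu)
  show "norm (lin_log (t / mu (l + m))) \<le> t * (1 / mu (l + m))" for l
    using lin_log_le lin_log_div_mu_nonneg[OF assms] by simp
qed

lemma summable_lin_log_Suc: "0 \<le> t \<Longrightarrow> summable (\<lambda>l. lin_log (t / mu (Suc l)))"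
  using summable_lin_log[of t 1] by simp

lemma kappa_nonneg: "0 \<le> t \<Longrightarrow> 0 \<le> kappa t"
  unfolding kappa_def
  by (rule suminf_nonneg[OF summable_lin_log_Suc]) (simp_all add: lin_log_div_mu_nonneg)

lemma kappa_split:
  assumes "0 < k" and "0 \<le> t"
  shows "kappa t = (\<Sum>l<k - 1. lin_log (t / mu (Suc l))) + (\<Sum>l. lin_log (t / mu (l + k)))"
proof -
  have "kappa t = (\<Sum>l. lin_log (t / mu (Suc (l + (k - 1))))) + (\<Sum>l<k - 1. lin_log (t / mu (Suc l)))"
    unfolding kappa_def by (rule suminf_split_initial_segment[OF summable_lin_log_Suc[OF assms(2)]])
  moreover have "Suc (l + (k - 1)) = l + k" for l using assms(1) by simp
  ultimately show ?thesis by simp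
qed


lemma power_mult_exp_kappa_le_M:
  assumes t: "0 < t"
  shows "t ^ j * exp (- kappa t) \<le> M j"
proof -
  have "real j * ln t - ln (M j) = (\<Sum>l<j. ln (t / mu (Suc l)))"
    using t mu_pos by (simp add: ln_M ln_div sum_subtractf)
  also have "\<dots> \<le> (\<Sum>l<j. lin_log (t / mu (Suc l)))"
    using t mu_pos by (intro sum_mono ln_le_lin_log) simp
  also have "\<dots> \<le> kappa t"
    unfolding kappa_def using t
    by (intro sum_le_suminf summable_lin_log_Suc) (simp_all add: lin_log_div_mu_nonneg)
  finally have "t ^ j / M j \<le> exp (kappa t)"
    using t M_pos[of j] by (simp add: ln_div ln_realpow flip: ln_le_cancel_iff)
  then show ?thesis using M_pos[of j] by (simp add: exp_minus field_simps)
qed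


lemma summable_min_div_mu:
  assumes "0 \<le> s"
  shows "summable (\<lambda>l. min (s / mu (Suc l)) 1)"
proof (rule summable_comparison_test'[where N = 0])
  show "summable (\<lambda>l. s * (1 / mu (l + 1)))" by (intro summable_mult summable_inverse_mu)
  show "norm (min (s / mu (Suc l)) 1) \<le> s * (1 / mu (l + 1))" for l
    using assms mu_pos[of "Suc l"] by simp
qed

lemma sum_min_sig_ge:
  assumes k: "0 < k"
  shows "real k \<le> (\<Sum>l. min (sig k / mu (Suc l)) 1)"
proof -
  define f where "f l = min (sig k / mu (Suc l)) 1" for l
  have f_nonneg: "0 \<le> f l" for l
    unfolding f_def using sig_pos[OF k] mu_pos[of "Suc l"] by simp
  have f_summable: "summable f"
    unfolding f_def using sig_pos[OF k] by (intro summable_min_div_mu) simp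
  show ?thesis
  proof (cases "mu k \<le> sig k")
    case True
    have "f l = 1" if "l < k" for l
      using True mu_le[of "Suc l" k] that mu_pos[of "Suc l"] by (simp add: f_def)
    then have "real k = (\<Sum>l<k. f l)" by simp
    also have "\<dots> \<le> suminf f" by (rule sum_le_suminf[OF f_summable]) (simp_all add: f_nonneg)
    finally show ?thesis unfolding f_def .
  next
    case False
    have "f (l + (k - 1)) = sig k / mu (l + k)" for l
      using False mu_le[of k "l + k"] mu_pos[of "l + k"] k by (simp add: f_def)
    then have "f sums (real k + (\<Sum>l<k - 1. f l))"
      using sig_sums[of k] by (simp flip: sums_iff_shift)
    then have "suminf f = real k + (\<Sum>l<k - 1. f l)" by (rule sums_unique[symmetric])
    moreover have "0 \<le> (\<Sum>l<k - 1. f l)" by (simp add: sum_nonneg f_nonneg)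
    ultimately show ?thesis unfolding f_def by simp
  qed
qed

lemma kappa_log_growth:
  assumes k: "0 < k" and t: "sig k \<le> t"
  shows "kappa (sig k) + real k * ln (t / sig k) \<le> kappa t"
proof -
  define s where "s = sig k"
  have s: "0 < s" unfolding s_def using sig_pos[OF k] .
  have "0 \<le> ln (t / s)" using s t unfolding s_def by simp
  have t': "0 < t" using s t unfolding s_def by simp
  have min_summable: "summable (\<lambda>l. min (s / mu (Suc l)) 1)"
    using s by (intro summable_min_div_mu) simp
  have "real k * ln (t / s) \<le> (\<Sum>l. min (s / mu (Suc l)) 1) * ln (t / s)"
    using sum_min_sig_ge[OF k] \<open>0 \<le> ln (t / s)\<close> unfolding s_def by (rule mult_right_mono)
  also have "\<dots> = (\<Sum>l. min (s / mu (Suc l)) 1 * ln (t / s))"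
    by (rule suminf_mult2[OF min_summable])
  also have "\<dots> \<le> (\<Sum>l. lin_log (t / mu (Suc l)) - lin_log (s / mu (Suc l)))"
  proof (rule suminf_le)
    show "min (s / mu (Suc l)) 1 * ln (t / s) \<le> lin_log (t / mu (Suc l)) - lin_log (s / mu (Suc l))"
      for l
      using lin_log_diff_ge[of "s / mu (Suc l)" "t / mu (Suc l)"] s t' mu_pos[of "Suc l"] by simp
    show "summable (\<lambda>l. min (s / mu (Suc l)) 1 * ln (t / s))"
      by (rule summable_mult2[OF min_summable])
    show "summable (\<lambda>l. lin_log (t / mu (Suc l)) - lin_log (s / mu (Suc l)))"
      using s t' by (intro summable_diff summable_lin_log_Suc) simp_all
  qed
  also have "\<dots> = kappa t - kappa s"
    unfolding kappa_def using s t'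
    by (intro suminf_diff[symmetric] summable_lin_log_Suc) simp_all
  finally show ?thesis unfolding s_def by simp
qed

lemma power_mult_exp_kappa_le_LM:
  assumes t: "0 < t"
  shows "t ^ k * exp (- kappa t) \<le> LM M k"
proof (cases "k = 0")
  case True
  then show ?thesis using kappa_nonneg[of t] t by (simp add: LM_def)
next
  case False
  then have k: "0 < k" by simp
  have "t ^ k * exp (- kappa t) \<le> sig k ^ (k - j) * M j" if "j < k" for j
  proof (cases "t \<le> sig k")
    case True
    have "t ^ k * exp (- kappa t) = t ^ (k - j) * (t ^ j * exp (- kappa t))"
      using that by (simp add: power_add[symmetric])
    also have "\<dots> \<le> sig k ^ (k - j) * M j"
      using True t power_mult_exp_kappa_le_M[OF t, of j] M_pos[of j]
      by (intro mult_mono power_mono) auto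
    finally show ?thesis .
  next
    case False
    define s where "s = sig k"
    have s: "0 < s" unfolding s_def using sig_pos[OF k] .
    have "t ^ k * exp (- kappa t) \<le> t ^ k * exp (- kappa s - real k * ln (t / s))"
      using kappa_log_growth[OF k, of t] False t unfolding s_def by (intro mult_left_mono) auto
    also have "\<dots> = s ^ k * exp (- kappa s)"
      using s t by (simp add: exp_diff exp_minus exp_of_nat_mult power_divide field_simps)
    also have "\<dots> = s ^ (k - j) * (s ^ j * exp (- kappa s))"
      using that by (simp add: power_add[symmetric])
    also have "\<dots> \<le> s ^ (k - j) * M j"
      using s power_mult_exp_kappa_le_M[OF s, of j] by (intro mult_left_mono) auto
    finally show ?thesis unfolding s_def .
  qed
  then show ?thesis
    using k unfolding LM_eq_Min[OF k] by (intro Min.boundedI) auto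
qed


lemma mu_crossing_index:
  assumes "0 < k"
  obtains j where "j < k" and "\<And>l. 1 \<le> l \<Longrightarrow> l \<le> j \<Longrightarrow> mu l \<le> s"
    and "\<And>l. j < l \<Longrightarrow> l < k \<Longrightarrow> s < mu l"
  using assms
proof (induction k arbitrary: thesis)
  case (Suc k)
  show ?case
  proof (cases "k = 0 \<or> s < mu k")
    case True
    show ?thesis
    proof (cases "k = 0")
      case False
      then obtain j where "j < k" "\<And>l. 1 \<le> l \<Longrightarrow> l \<le> j \<Longrightarrow> mu l \<le> s"
        "\<And>l. j < l \<Longrightarrow> l < k \<Longrightarrow> s < mu l"
        using Suc.IH by blast
      then show ?thesis using True Suc.prems(1)[of j] less_antisym by fastforce
    qed (use Suc.prems(1)[of 0] in simp)
  next
    case False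
    then show ?thesis using Suc.prems(1)[of k] mu_le by fastforce
  qed
qed simp

lemma sum_lin_log_le_crossing:
  assumes s: "0 < s" and "j < k" and below: "\<And>l. 1 \<le> l \<Longrightarrow> l \<le> j \<Longrightarrow> mu l \<le> s"
    and above: "\<And>l. j < l \<Longrightarrow> l < k \<Longrightarrow> s < mu l"
  shows "(\<Sum>l<k - 1. lin_log (s / mu (Suc l))) \<le> real (k - 1) + real j * ln s - ln (M j)"
proof -
  have "lin_log (s / mu (Suc l)) \<le> 1 + (if l < j then ln (s / mu (Suc l)) else 0)"
    if "l < k - 1" for l
  proof (cases "l < j")
    case True
    then show ?thesis using below[of "Suc l"] mu_pos[of "Suc l"] by (simp add: lin_log_le_one_plus_ln)
  next
    case False
    then show ?thesis using above[of "Suc l"] that mu_pos[of "Suc l"] by (simp add: lin_log_le_one)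
  qed
  then have "(\<Sum>l<k - 1. lin_log (s / mu (Suc l)))
      \<le> (\<Sum>l<k - 1. 1 + (if l < j then ln (s / mu (Suc l)) else 0))"
    by (intro sum_mono) simp
  also have "\<dots> = real (k - 1) + (\<Sum>l<k - 1. if l < j then ln (s / mu (Suc l)) else 0)"
    by (simp add: sum.distrib)
  also have "(\<Sum>l<k - 1. if l < j then ln (s / mu (Suc l)) else 0) = (\<Sum>l<j. ln (s / mu (Suc l)))"
  proof -
    have "{..<k - 1} \<inter> {l. l < j} = {..<j}" using \<open>j < k\<close> by auto
    then show ?thesis by (simp add: sum.If_cases)
  qed
  also have "\<dots> = real j * ln s - ln (M j)"
    using s by (simp add: ln_M ln_div sum_subtractf)
  finally show ?thesis by simp
qed

lemma kappa_sig_le: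
  assumes k: "0 < k"
  obtains j where "j < k" and "kappa (sig k) \<le> 2 * real k + real j * ln (sig k) - ln (M j)"
proof -
  define s where "s = sig k"
  have s: "0 < s" unfolding s_def using sig_pos[OF k] .
  obtain j where j: "j < k" and below: "\<And>l. 1 \<le> l \<Longrightarrow> l \<le> j \<Longrightarrow> mu l \<le> s"
    and above: "\<And>l. j < l \<Longrightarrow> l < k \<Longrightarrow> s < mu l"
    using mu_crossing_index[OF k] by blast
  have "(\<Sum>l. lin_log (s / mu (l + k))) \<le> (\<Sum>l. s / mu (l + k))"
    using s sig_sums[of k] unfolding s_def
    by (intro suminf_le lin_log_le summable_lin_log) (auto simp: sums_summable)
  also have "\<dots> = real k" using sig_sums[of k] unfolding s_def by (rule sums_unique[symmetric])
  finally have "kappa s \<le> 2 * real k + real j * ln s - ln (M j)"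
    using kappa_split[OF k, of s] sum_lin_log_le_crossing[OF s j below above] k s
    by (simp add: of_nat_diff)
  then show thesis using that j unfolding s_def by blast
qed

lemma LM_le_exp_kappa_sig:
  assumes k: "0 < k"
  shows "LM M k \<le> exp (2 * real k) * sig k ^ k * exp (- kappa (sig k))"
proof -
  define s where "s = sig k"
  have s: "0 < s" unfolding s_def using sig_pos[OF k] .
  obtain j where j: "j < k" and kappa_le: "kappa s \<le> 2 * real k + real j * ln s - ln (M j)"
    using kappa_sig_le[OF k] unfolding s_def by blast
  have "LM M k \<le> s ^ (k - j) * M j"
    unfolding LM_eq_Min[OF k] s_def using j by (intro Min_le) auto
  also have "\<dots> = exp (2 * real k) * s ^ k * exp (- (2 * real k + real j * ln s - ln (M j)))"
  proof -
    have "exp (- (2 * real k + real j * ln s - ln (M j))) = M j / (exp (2 * real k) * s ^ j)"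
      using s M_pos[of j] by (simp add: exp_diff exp_add exp_minus exp_of_nat_mult divide_simps)
    moreover have "s ^ k = s ^ (k - j) * s ^ j" using j by (simp add: power_add[symmetric])
    ultimately show ?thesis using s by simp
  qed
  also have "\<dots> \<le> exp (2 * real k) * s ^ k * exp (- kappa s)"
    using kappa_le s by (intro mult_left_mono) auto
  finally show ?thesis unfolding s_def .
qed

lemma LM_pos: "0 < LM M k"
  using power_mult_exp_kappa_le_LM[of 1 k] by (simp add: less_le_trans[OF exp_gt_zero])

lemma omega_finite_LM: "omega_finite (LM M)"
proof
  show "LM M 0 = 1" by (simp add: LM_def)
  show "0 < LM M k" for k by (rule LM_pos)
  show "bdd_above (range (\<lambda>k. ln (t ^ k * LM M 0 / LM M k)))" if t: "0 < t" for t
  proof (rule bdd_aboveI2)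
    fix k
    have "t ^ k / LM M k \<le> exp (kappa t)"
      using power_mult_exp_kappa_le_LM[OF t, of k] LM_pos[of k] by (simp add: exp_minus field_simps)
    then show "ln (t ^ k * LM M 0 / LM M k) \<le> kappa t"
      using t LM_pos[of k] by (simp add: LM_def ln_le_cancel_iff[symmetric])
  qed
qed

end

locale nq_weight_dominated = m: nq_weight M + n: nq_weight N
  for M N :: "nat \<Rightarrow> real" +
  fixes C :: real
  assumes C_pos: "0 < C" and M_le: "M k \<le> C ^ k * N k"
begin

lemma sum_ln_ratio_nonneg: "0 \<le> (\<Sum>l<j. ln (C * n.mu (Suc l) / m.mu (Suc l)))"
proof -
  have "(\<Sum>l<j. ln (C * n.mu (Suc l) / m.mu (Suc l))) = real j * ln C + ln (N j) - ln (M j)"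
    using C_pos m.mu_pos n.mu_pos
    by (simp add: ln_div ln_mult n.ln_M m.ln_M sum.distrib sum_subtractf)
  moreover have "ln (M j) \<le> ln (C ^ j * N j)"
    using M_le[of j] m.M_pos[of j] by simp
  ultimately show ?thesis using C_pos n.M_pos[of j] by (simp add: ln_mult ln_realpow)
qed

lemma sum_lin_log_le_rescaled:
  assumes t: "0 < t"
  shows "(\<Sum>l<j. lin_log (t / n.mu (Suc l))) \<le> (\<Sum>l<j. lin_log (C * t / m.mu (Suc l)))"
proof -
  define c where "c l = min (t / n.mu (Suc l)) 1" for l
  define d where "d l = ln (C * n.mu (Suc l) / m.mu (Suc l))" for l
  have "0 \<le> (\<Sum>l<j. c l * d l)"
  proof (rule sum_antimono_mult_nonneg)
    show "c (Suc l) \<le> c l" for l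
      unfolding c_def using t n.mu_le[of "Suc l" "Suc (Suc l)"] n.mu_pos[of "Suc l"]
      by (simp add: frac_le min.coboundedI1)
    show "0 \<le> c l" for l unfolding c_def using t n.mu_pos[of "Suc l"] by simp
    show "0 \<le> (\<Sum>l<j. d l)" for j unfolding d_def by (rule sum_ln_ratio_nonneg)
  qed
  also have "\<dots> \<le> (\<Sum>l<j. lin_log (C * t / m.mu (Suc l)) - lin_log (t / n.mu (Suc l)))"
  proof (rule sum_mono)
    fix l
    have "(C * t / m.mu (Suc l)) / (t / n.mu (Suc l)) = C * n.mu (Suc l) / m.mu (Suc l)"
      using t by simp
    then show "c l * d l \<le> lin_log (C * t / m.mu (Suc l)) - lin_log (t / n.mu (Suc l))"
      unfolding c_def d_def using lin_log_diff_ge[of "t / n.mu (Suc l)" "C * t / m.mu (Suc l)"]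
        t C_pos m.mu_pos[of "Suc l"] n.mu_pos[of "Suc l"] by simp
  qed
  finally show ?thesis by (simp add: sum_subtractf)
qed

lemma kappa_le_rescaled:
  assumes t: "0 < t"
  shows "n.kappa t \<le> m.kappa (C * t)"
  unfolding n.kappa_def
proof (rule suminf_le_const)
  show "summable (\<lambda>l. lin_log (t / n.mu (Suc l)))" using t by (intro n.summable_lin_log_Suc) simp
  have Ct: "0 \<le> C * t" using C_pos t by simp
  show "(\<Sum>l<j. lin_log (t / n.mu (Suc l))) \<le> m.kappa (C * t)" for j
    using sum_lin_log_le_rescaled[OF t, of j]
      sum_le_suminf[OF m.summable_lin_log_Suc[OF Ct], of "{..<j}"]
    unfolding m.kappa_def by (simp add: m.lin_log_div_mu_nonneg[OF Ct])
qed

lemma LM_le: "LM M k \<le> (exp 2 * C) ^ k * LM N k"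
proof (cases "k = 0")
  case True
  then show ?thesis by (simp add: LM_def)
next
  case False
  then have k: "0 < k" by simp
  define s where "s = m.sig k"
  have s: "0 < s" unfolding s_def using m.sig_pos[OF k] .
  have "LM M k \<le> exp (2 * real k) * s ^ k * exp (- m.kappa s)"
    unfolding s_def by (rule m.LM_le_exp_kappa_sig[OF k])
  also have "\<dots> \<le> exp (2 * real k) * s ^ k * exp (- n.kappa (s / C))"
    using kappa_le_rescaled[of "s / C"] s C_pos by (intro mult_left_mono) auto
  also have "\<dots> = (exp 2 * C) ^ k * ((s / C) ^ k * exp (- n.kappa (s / C)))"
    using C_pos by (simp add: power_divide power_mult_distrib exp_of_nat_mult[symmetric] mult.commute)
  also have "\<dots> \<le> (exp 2 * C) ^ k * LM N k"
    using n.power_mult_exp_kappa_le_LM[of "s / C" k] s C_pos by (intro mult_left_mono) auto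
  finally show ?thesis .
qed

end

theorem lemma4p4:
  fixes M N :: "nat \<Rightarrow> real"
  assumes "weight_seq M" and "weight_seq N"
    and "non_quasianalytic M" and "non_quasianalytic N"
    and "seq_preceq M N"
  shows "seq_preceq (LM M) (LM N) \<and> seq_preceq (lc_minorant (LM M)) (lc_minorant (LM N))"
proof -
  interpret m: nq_weight M using assms(1,3) by unfold_locales
  interpret n: nq_weight N using assms(2,4) by unfold_locales
  have "M 0 \<le> N 0" by (simp add: m.M_0 n.M_0)
  then obtain C where "0 < C" and "\<And>k. M k \<le> C ^ k * N k"
    using seq_preceqE[OF assms(5) m.M_pos n.M_pos] by blast
  then interpret nq_weight_dominated M N C by unfold_locales
  have D: "0 < exp 2 * C" using C_pos by simp
  interpret LM_M: omega_finite "LM M" by (rule m.omega_finite_LM)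
  interpret LM_N: omega_finite "LM N" by (rule n.omega_finite_LM)
  have "seq_preceq (LM M) (LM N)"
    by (rule seq_preceqI[OF D]) (simp_all add: LM_le less_imp_le m.LM_pos n.LM_pos)
  moreover have "seq_preceq (lc_minorant (LM M)) (lc_minorant (LM N))"
    by (rule seq_preceqI[OF D])
      (simp_all add: less_imp_le LM_M.lc_minorant_pos LM_N.lc_minorant_pos
        lc_minorant_le[OF m.omega_finite_LM n.omega_finite_LM D LM_le])
  ultimately show ?thesis ..
qed

end
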